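(* There is a constant $C$ depending only on $n$ such that for every non-negative Borel measure $\mu$ on $\overline{\mathbb{R}^{n+1}_+}$, $$\sup_{B\subset\mathbb{R}^n}\frac1{|B|}\iint_{\underline{\widehat B}}E(d\mu)\,d\mu\le C,$$ where the supremum is over open balls $B$.
   Context: $\mathbb{R}^{n+1}_+=\mathbb{R}^n\times(0,\infty)$ and $\overline{\mathbb{R}^{n+1}_+}$ its closure. For $(y,t)\in\mathbb{R}^{n+1}_+$, $B(y,t)=\{z\in\mathbb{R}^n:|z-y|<t\}$; $\Gamma(x)=\{(y,t)\in\mathbb{R}^{n+1}_+:|y-x|<t\}$; for an open ball $B\subset\mathbb{R}^n$, $\widehat B=\{(y,t)\in\mathbb{R}^{n+1}_+:B(y,t)\subset B\}$ and $\underline{\widehat B}$ denotes its closure (the closed tent). The balayage of $\mu$ is $\overline{\mathcal{A}}(d\mu)(x)=\iint_{\Gamma(x)}s^{-n}\,d\mu(z,s)$, $x\in\mathbb{R}^n$, and its extension is $E(d\mu)(y,t)=\frac1{|B(y,t)|}\int_{B(y,t)}\overline{\mathcal{A}}(d\mu)(x)^{-1}\,dx$ for $(y,t)\in\mathbb{R}^{n+1}_+$. *)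

theory Defs
  imports "HOL-Analysis.Analysis"
begin

text \<open>Points of the (closed) upper half space are pairs (y,t) with y in the
  n-dimensional Euclidean space 'a (n = DIM('a)) and t real.\<close>

definition upper_half_closed :: "('a::euclidean_space \<times> real) set" where
  "upper_half_closed = {z. snd z \<ge> 0}"

definition cone_at :: "'a::euclidean_space \<Rightarrow> ('a \<times> real) set" where
  "cone_at x = {(y, t). 0 < t \<and> dist y x < t}"

definition tent :: "'a::euclidean_space set \<Rightarrow> ('a \<times> real) set" where
  "tent B = {(y, t). 0 < t \<and> ball y t \<subseteq> B}"

definition closed_tent :: "'a::euclidean_space set \<Rightarrow> ('a \<times> real) set" where
  "closed_tent B = closure (tent B)"

definition balayage :: "('a::euclidean_space \<times> real) measure \<Rightarrow> 'a \<Rightarrow> ennreal" where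
  "balayage M x = (\<integral>\<^sup>+ z. indicator (cone_at x) z * ennreal (1 / (snd z) ^ DIM('a)) \<partial>M)"

text \<open>Extension E(d mu)(y,t): average over B(y,t) of balayage^(-1) (with
  inverse 0 = \<infinity>, inverse \<infinity> = 0 in ennreal). E is only defined for t > 0;
  on the boundary t = 0 it is set to 0.\<close>
definition ext_bal :: "('a::euclidean_space \<times> real) measure \<Rightarrow> 'a \<times> real \<Rightarrow> ennreal" where
  "ext_bal M z = (if 0 < snd z then
      (\<integral>\<^sup>+ x \<in> ball (fst z) (snd z). inverse (balayage M x) \<partial>lborel)
        / emeasure lborel (ball (fst z) (snd z))
    else 0)"

end

theory Submission
  imports Defs
begin

text \<open>Write \<open>A = balayage \<mu>\<close>, \<open>\<omega>\<^sub>n\<close> for the volume of the unit ball and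
  \<open>K(x,(y,s)) = s\<^sup>-\<^sup>n \<one>\<^bsub>\<Gamma>(x)\<^esub>(y,s)\<close>, so that \<open>A(x) = \<integral> K(x,\<cdot>) d\<mu>\<close>. Since
  \<open>x \<in> B(y,t) \<longleftrightarrow> (y,t) \<in> \<Gamma>(x)\<close>, the extension is \<open>E(z) = \<omega>\<^sub>n\<^sup>-\<^sup>1 \<integral> A(x)\<^sup>-\<^sup>1 K(x,z) dx\<close>.
  Exchanging the integrals,
  \<open>\<integral>\<^bsub>T\<^esub> E d\<mu> = \<omega>\<^sub>n\<^sup>-\<^sup>1 \<integral> A(x)\<^sup>-\<^sup>1 \<integral>\<^bsub>T\<^esub> K(x,\<cdot>) d\<mu> dx \<le> \<omega>\<^sub>n\<^sup>-\<^sup>1 |B|\<close> for the closed tent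
  \<open>T\<close> over \<open>B\<close>, because the inner integral is at most \<open>A(x)\<close> and vanishes for \<open>x \<notin> B\<close>.
  Tonelli needs \<open>\<mu>\<close> to be \<open>\<sigma>\<close>-finite. In general, restricting \<open>\<mu>\<close> decreases \<open>A\<close> and so
  increases \<open>E\<close>, and it suffices to keep the points of \<open>T\<close> where \<open>E > 0\<close>. They lie in
  cones \<open>\<Gamma>(x)\<close> with \<open>A(x) < \<infinity>\<close>, countably many of which suffice (Lindel\<ouml>f), and each meets
  \<open>T\<close> in a set of measure at most \<open>r\<^sup>n A(x)\<close>.\<close>

definition cone_kernel :: "'a::euclidean_space \<Rightarrow> 'a \<times> real \<Rightarrow> ennreal" where
  "cone_kernel x z = indicator (cone_at x) z * ennreal (1 / snd z ^ DIM('a))"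

lemma balayage_eq_cone_kernel: "balayage M x = (\<integral>\<^sup>+ z. cone_kernel x z \<partial>M)"
  by (simp add: balayage_def cone_kernel_def)

lemma cone_kernel_eq_ball:
  fixes x :: "'a::euclidean_space"
  shows "cone_kernel x z = indicator (ball (fst z) (snd z)) x * ennreal (1 / snd z ^ DIM('a))"
  by (cases z) (auto simp: cone_kernel_def cone_at_def indicator_def dist_commute
      dest: le_less_trans[OF zero_le_dist])

lemma open_cone_at: "open (cone_at (x::'a::euclidean_space))"
proof -
  have "cone_at x = {z. 0 < snd z \<and> dist (fst z) x < snd z}"
    by (auto simp: cone_at_def)
  also have "open \<dots>"
    by (intro open_Collect_conj open_Collect_less continuous_intros)
  finally show ?thesis .
qed

lemma borel_measurable_cone_kernel:
  "(\<lambda>w::'a::euclidean_space \<times> ('a \<times> real). cone_kernel (fst w) (snd w)) \<in> borel_measurable borel"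
proof -
  have "{w \<in> space borel. snd w \<in> cone_at (fst w)}
      = {w::'a \<times> ('a \<times> real). 0 < snd (snd w) \<and> dist (fst (snd w)) (fst w) < snd (snd w)}"
    by (auto simp: cone_at_def)
  also have "\<dots> \<in> sets borel"
    by (intro borel_open open_Collect_conj open_Collect_less continuous_intros)
  finally have "(\<lambda>w::'a \<times> ('a \<times> real). indicator (cone_at (fst w)) (snd w) :: ennreal)
      \<in> borel_measurable borel"
    by (rule borel_measurable_indicator')
  moreover have "(\<lambda>w::'a \<times> ('a \<times> real). ennreal (1 / snd (snd w) ^ DIM('a))) \<in> borel_measurable borel"
    by (intro measurable_compose[OF _ measurable_ennreal] borel_measurable_divide borel_measurable_power
        borel_measurable_const borel_measurable_continuous_onI continuous_intros)
  ultimately show ?thesis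
    unfolding cone_kernel_def by (rule borel_measurable_times_ennreal)
qed

lemma measurable_ident_pair_lborel:
  fixes N :: "'b::euclidean_space measure"
  assumes "(\<lambda>z. z) \<in> measurable N borel"
  shows "(\<lambda>w. w) \<in> measurable ((lborel::'a::euclidean_space measure) \<Otimes>\<^sub>M N) borel"
proof -
  have "(\<lambda>w. (fst w, snd w)) \<in> measurable (lborel \<Otimes>\<^sub>M N) (borel \<Otimes>\<^sub>M (borel :: 'b measure))"
    using assms
    by (intro measurable_Pair measurable_compose[OF measurable_snd]) (simp_all add: measurable_fst'')
  then show ?thesis
    by (simp add: borel_prod)
qed

lemma measurable_cone_kernel_pair:
  fixes N :: "('a::euclidean_space \<times> real) measure"
  assumes "(\<lambda>z. z) \<in> measurable N borel"
  shows "(\<lambda>w. cone_kernel (fst w) (snd w)) \<in> borel_measurable (lborel \<Otimes>\<^sub>M N)"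
  using measurable_compose[OF measurable_ident_pair_lborel[OF assms] borel_measurable_cone_kernel]
  by simp

lemma borel_measurable_balayage:
  fixes N :: "('a::euclidean_space \<times> real) measure"
  assumes "sigma_finite_measure N" and "(\<lambda>z. z) \<in> measurable N borel"
  shows "balayage N \<in> borel_measurable borel"
proof -
  interpret sigma_finite_measure N by fact
  show ?thesis
    unfolding balayage_eq_cone_kernel[abs_def]
    using borel_measurable_nn_integral[of cone_kernel lborel] measurable_cone_kernel_pair[OF assms(2)]
    by (simp add: split_beta')
qed

lemma closed_tent_ball_subset:
  fixes c :: "'a::euclidean_space"
  shows "closed_tent (ball c r) \<subseteq> {z. dist (fst z) c + snd z \<le> r}"
proof -
  have "tent (ball c r) \<subseteq> {z. dist (fst z) c + snd z \<le> r}"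
    by (auto simp: tent_def ball_subset_ball_iff)
  moreover have "closed {z::'a \<times> real. dist (fst z) c + snd z \<le> r}"
    by (intro closed_Collect_le continuous_intros)
  ultimately show ?thesis
    unfolding closed_tent_def by (rule closure_minimal)
qed

lemma mem_closed_tent_cone_at:
  fixes c :: "'a::euclidean_space"
  assumes "z \<in> closed_tent (ball c r)" and "z \<in> cone_at x"
  shows "x \<in> ball c r" and "snd z \<le> r"
proof -
  have tent: "dist (fst z) c + snd z \<le> r"
    using closed_tent_ball_subset assms(1) by blast
  moreover have "dist (fst z) x < snd z"
    using assms(2) by (auto simp: cone_at_def)
  ultimately show "x \<in> ball c r"
    using dist_triangle[of x c "fst z"] by (simp add: dist_commute)
  show "snd z \<le> r"
    using tent zero_le_dist[of "fst z" c] by linarith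
qed

lemma ennreal_inverse_antimono: "(a::ennreal) \<le> b \<Longrightarrow> inverse b \<le> inverse a"
  including ennreal.lifting by transfer (rule ereal_inverse_antimono)

text \<open>Also for \<open>a = 0\<close> and \<open>a = \<infinity>\<close>, as \<open>0 * \<infinity> = 0\<close> in \<open>ennreal\<close>.\<close>

lemma ennreal_inverse_mult_self_le: "inverse a * a \<le> (1::ennreal)"
  by (cases "a = 0 \<or> a = top")
    (auto simp: mult.commute[of "inverse a"] divide_ennreal_def[symmetric] top.not_eq_extremum)

lemma ext_bal_eq_nn_integral_cone_kernel:
  fixes M :: "('a::euclidean_space \<times> real) measure"
  assumes [measurable]: "balayage M \<in> borel_measurable borel"
  shows "ext_bal M z = (\<integral>\<^sup>+ x. ennreal (1 / unit_ball_vol DIM('a)) * inverse (balayage M x)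
                                  * cone_kernel x z \<partial>lborel)"
proof (cases "0 < snd z")
  case False
  then show ?thesis
    by (simp add: ext_bal_def cone_kernel_eq_ball not_less ball_empty)
next
  case True
  obtain y t where z: "z = (y, t)" and t: "0 < t"
    using True by (cases z) auto
  define \<omega> where "\<omega> = unit_ball_vol DIM('a)"
  have \<omega>: "0 < \<omega>"
    by (simp add: \<omega>_def)
  have "(\<integral>\<^sup>+ x. ennreal (1 / \<omega>) * inverse (balayage M x) * cone_kernel x z \<partial>lborel)
      = (\<integral>\<^sup>+ x. (ennreal (1 / \<omega>) * ennreal (1 / t ^ DIM('a)))
                 * (inverse (balayage M x) * indicator (ball y t) x) \<partial>lborel)"
    by (intro nn_integral_cong) (simp add: cone_kernel_eq_ball z ac_simps)
  also have "\<dots> = ennreal (1 / \<omega>) * ennreal (1 / t ^ DIM('a))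
                    * (\<integral>\<^sup>+ x \<in> ball y t. inverse (balayage M x) \<partial>lborel)"
    by (intro nn_integral_cmult borel_measurable_times_ennreal borel_measurable_indicator) measurable
  also have "ennreal (1 / \<omega>) * ennreal (1 / t ^ DIM('a)) = inverse (emeasure lborel (ball y t))"
    using \<omega> t by (simp add: emeasure_ball \<omega>_def inverse_ennreal ennreal_mult[symmetric] field_simps)
  also have "inverse (emeasure lborel (ball y t)) * (\<integral>\<^sup>+ x \<in> ball y t. inverse (balayage M x) \<partial>lborel)
      = ext_bal M z"
    using t by (simp add: ext_bal_def z divide_ennreal_def mult.commute)
  finally show ?thesis
    unfolding \<omega>_def ..
qed

lemma nn_integral_cone_kernel_closed_tent_le:
  fixes c :: "'a::euclidean_space"
  shows "(\<integral>\<^sup>+ z. cone_kernel x z * indicator (closed_tent (ball c r)) z \<partial>N)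
           \<le> indicator (ball c r) x * balayage N x"
proof (cases "x \<in> ball c r")
  case True
  then show ?thesis
    unfolding balayage_eq_cone_kernel by (simp add: nn_integral_mono indicator_def)
next
  case False
  then have "(\<lambda>z. cone_kernel x z * indicator (closed_tent (ball c r)) z) = (\<lambda>z. 0)"
    using mem_closed_tent_cone_at(1)[of _ c r x] by (auto simp: fun_eq_iff cone_kernel_def indicator_def)
  then show ?thesis
    by simp
qed

lemma closed_tent_ext_bal_integral_le_sigma_finite:
  fixes N :: "('a::euclidean_space \<times> real) measure" and c :: 'a
  assumes "sigma_finite_measure N" and N_borel: "(\<lambda>z. z) \<in> measurable N borel"
  shows "(\<integral>\<^sup>+ z. indicator (closed_tent (ball c r)) z * ext_bal N z \<partial>N)
           \<le> ennreal (1 / unit_ball_vol DIM('a)) * emeasure lborel (ball c r)"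
proof -
  interpret N: sigma_finite_measure N by fact
  interpret pair_sigma_finite lborel N
    by (simp add: pair_sigma_finite_def assms(1) sigma_finite_lborel)
  define T where "T = closed_tent (ball c r)"
  define \<kappa> where "\<kappa> = ennreal (1 / unit_ball_vol DIM('a))"
  define A where "A = balayage N"
  define F where "F x z = \<kappa> * inverse (A x) * (cone_kernel x z * indicator T z)" for x z
  have A_meas[measurable]: "A \<in> borel_measurable borel"
    using borel_measurable_balayage[OF assms] by (simp add: A_def)
  have T_meas[measurable]: "(\<lambda>z. indicator T z :: ennreal) \<in> borel_measurable N"
    unfolding T_def closed_tent_def
    by (intro measurable_compose[OF N_borel] borel_measurable_indicator borel_closed) simp
  have K_meas[measurable]: "(\<lambda>w. cone_kernel (fst w) (snd w)) \<in> borel_measurable (lborel \<Otimes>\<^sub>M N)"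
    by (rule measurable_cone_kernel_pair[OF N_borel])
  have K_meas_N: "cone_kernel x \<in> borel_measurable N" for x
    using measurable_compose[OF measurable_Pair1'[of x lborel N] K_meas] by simp
  have F_meas: "case_prod F \<in> borel_measurable (lborel \<Otimes>\<^sub>M N)"
    unfolding F_def split_beta' by measurable
  have outer: "indicator T z * ext_bal N z = (\<integral>\<^sup>+ x. F x z \<partial>lborel)" if "z \<in> space N" for z
  proof -
    have [measurable]: "(\<lambda>x. cone_kernel x z) \<in> borel_measurable lborel"
      using measurable_compose[OF measurable_Pair2'[OF that] K_meas] by simp
    have "(\<lambda>x. \<kappa> * inverse (A x) * cone_kernel x z) \<in> borel_measurable lborel"
      by measurable
    then have "(\<integral>\<^sup>+ x. F x z \<partial>lborel)
        = (\<integral>\<^sup>+ x. \<kappa> * inverse (A x) * cone_kernel x z \<partial>lborel) * indicator T z"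
      unfolding F_def mult.assoc[symmetric] by (rule nn_integral_multc)
    then show ?thesis
      unfolding ext_bal_eq_nn_integral_cone_kernel[OF borel_measurable_balayage[OF assms]]
        \<kappa>_def[symmetric] A_def[symmetric]
      by (simp add: mult.commute)
  qed
  have inner: "(\<integral>\<^sup>+ z. F x z \<partial>N) \<le> \<kappa> * indicator (ball c r) x" for x
  proof -
    have "(\<integral>\<^sup>+ z. F x z \<partial>N) = \<kappa> * inverse (A x) * (\<integral>\<^sup>+ z. cone_kernel x z * indicator T z \<partial>N)"
      unfolding F_def by (intro nn_integral_cmult borel_measurable_times_ennreal K_meas_N T_meas)
    also have "\<dots> \<le> \<kappa> * inverse (A x) * (indicator (ball c r) x * A x)"
      unfolding T_def A_def by (intro mult_left_mono nn_integral_cone_kernel_closed_tent_le) simp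
    also have "\<dots> = \<kappa> * indicator (ball c r) x * (inverse (A x) * A x)"
      by (simp add: ac_simps)
    also have "\<dots> \<le> \<kappa> * indicator (ball c r) x"
      using mult_left_mono[OF ennreal_inverse_mult_self_le[of "A x"], of "\<kappa> * indicator (ball c r) x"]
      by simp
    finally show ?thesis .
  qed
  have "(\<integral>\<^sup>+ z. indicator T z * ext_bal N z \<partial>N) = (\<integral>\<^sup>+ z. (\<integral>\<^sup>+ x. F x z \<partial>lborel) \<partial>N)"
    by (intro nn_integral_cong outer)
  also have "\<dots> = (\<integral>\<^sup>+ x. (\<integral>\<^sup>+ z. F x z \<partial>N) \<partial>lborel)"
    by (rule Fubini'[OF F_meas])
  also have "\<dots> \<le> (\<integral>\<^sup>+ x. \<kappa> * indicator (ball c r) x \<partial>lborel)"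
    by (intro nn_integral_mono inner)
  also have "\<dots> = \<kappa> * emeasure lborel (ball c r)"
    by (intro nn_integral_cmult_indicator) simp
  finally show ?thesis
    unfolding T_def \<kappa>_def .
qed

lemma ext_bal_antimono:
  assumes "\<And>x. balayage N x \<le> balayage M x"
  shows "ext_bal M z \<le> ext_bal N z"
  unfolding ext_bal_def
  by (auto intro!: divide_right_mono_ennreal nn_integral_mono mult_right_mono ennreal_inverse_antimono assms)

lemma balayage_restrict_space_le:
  assumes "Q \<inter> space M \<in> sets M"
  shows "balayage (restrict_space M Q) x \<le> balayage M x"
  unfolding balayage_eq_cone_kernel nn_integral_restrict_space[OF assms]
  by (intro nn_integral_mono) (simp add: indicator_def)

lemma ext_bal_nonzero_imp_cone_at:
  assumes "ext_bal M z \<noteq> 0"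
  obtains x where "balayage M x < top" and "z \<in> cone_at x"
proof -
  obtain y t where z: "z = (y, t)" and t: "0 < t"
    using assms by (cases z) (auto simp: ext_bal_def split: if_splits)
  have "\<exists>x\<in>ball y t. balayage M x < top"
  proof (rule ccontr)
    assume "\<not> ?thesis"
    then have "(\<lambda>x. inverse (balayage M x) * indicator (ball y t) x) = (\<lambda>x. 0)"
      by (auto simp: fun_eq_iff top.not_eq_extremum indicator_def)
    then have "(\<integral>\<^sup>+ x \<in> ball y t. inverse (balayage M x) \<partial>lborel) = 0"
      by simp
    then have "ext_bal M z = 0"
      by (simp add: ext_bal_def z)
    with assms show False ..
  qed
  then show ?thesis
    using that t by (auto simp: z cone_at_def dist_commute)
qed

lemma emeasure_cone_at_closed_tent_less_top:
  fixes M :: "('a::euclidean_space \<times> real) measure"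
  assumes "0 < r" and "balayage M x < top"
    and "S \<in> sets M" and "S \<subseteq> cone_at x \<inter> closed_tent (ball c r)"
  shows "emeasure M S < top"
proof -
  have "ennreal (1 / r ^ DIM('a)) * emeasure M S = (\<integral>\<^sup>+ z. ennreal (1 / r ^ DIM('a)) * indicator S z \<partial>M)"
    using assms(3) by (rule nn_integral_cmult_indicator[symmetric])
  also have "\<dots> \<le> balayage M x"
    unfolding balayage_eq_cone_kernel
  proof (intro nn_integral_mono)
    fix z
    show "ennreal (1 / r ^ DIM('a)) * indicator S z \<le> cone_kernel x z"
    proof (cases "z \<in> S")
      case True
      then have "0 < snd z" "snd z \<le> r" and "z \<in> cone_at x"
        using assms(4) mem_closed_tent_cone_at(2)[of z c r x] by (auto simp: cone_at_def)
      then have "1 / r ^ DIM('a) \<le> 1 / snd z ^ DIM('a)"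
        by (intro divide_left_mono power_mono mult_pos_pos zero_less_power) auto
      with True \<open>z \<in> cone_at x\<close> show ?thesis
        by (auto simp: cone_kernel_def intro: ennreal_leI)
    qed simp
  qed
  also have "\<dots> < top"
    by fact
  finally show ?thesis
    using \<open>0 < r\<close> by (auto simp: ennreal_mult_less_top)
qed

lemma sigma_finite_measure_restrict_space_Union:
  assumes "countable \<C>" and "\<C> \<subseteq> sets M" and "\<And>C. C \<in> \<C> \<Longrightarrow> emeasure M C < top"
  shows "sigma_finite_measure (restrict_space M (\<Union>\<C>))"
proof
  have "\<Union>\<C> \<in> sets M"
    using assms(1,2) by (intro sets.countable_Union)
  then have U: "\<Union>\<C> \<inter> space M \<in> sets M"
    by (simp add: sets.Int_space_eq2)
  show "\<exists>A. countable A \<and> A \<subseteq> sets (restrict_space M (\<Union>\<C>)) \<and> \<Union>A = space (restrict_space M (\<Union>\<C>))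
          \<and> (\<forall>a\<in>A. emeasure (restrict_space M (\<Union>\<C>)) a \<noteq> \<infinity>)"
  proof (intro exI[of _ \<C>] conjI ballI)
    show "countable \<C>"
      by fact
    show "\<C> \<subseteq> sets (restrict_space M (\<Union>\<C>))"
      using assms(2) by (auto simp: sets_restrict_space_iff[OF U])
    have "\<Union>\<C> \<subseteq> space M"
      using assms(2) sets.sets_into_space by blast
    then show "\<Union>\<C> = space (restrict_space M (\<Union>\<C>))"
      by (simp add: space_restrict_space Int_absorb2)
    show "emeasure (restrict_space M (\<Union>\<C>)) C \<noteq> \<infinity>" if "C \<in> \<C>" for C
      using assms(3)[OF that] that by (subst emeasure_restrict_space[OF U]) (auto simp: infinity_ennreal_def)
  qed
qed

lemma closed_tent_ext_bal_support_countable_cover: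
  fixes M :: "('a::euclidean_space \<times> real) measure" and c :: 'a
  assumes M_borel: "(\<lambda>z. z) \<in> measurable M borel" and r: "0 < r"
  obtains \<C> where "countable \<C>" and "\<C> \<subseteq> sets M" and "\<And>C. C \<in> \<C> \<Longrightarrow> emeasure M C < top"
    and "\<And>z. z \<in> space M \<Longrightarrow> indicator (closed_tent (ball c r)) z * ext_bal M z \<noteq> 0 \<Longrightarrow> z \<in> \<Union>\<C>"
proof -
  define T where "T = closed_tent (ball c r)"
  obtain \<F> where \<F>: "\<F> \<subseteq> cone_at ` {x. balayage M x < top}" "countable \<F>"
      "\<Union>\<F> = \<Union>(cone_at ` {x. balayage M x < top})"
    using Lindelof[of "cone_at ` {x. balayage M x < top}"] open_cone_at by blast
  define \<C> where "\<C> = (\<lambda>U. U \<inter> T \<inter> space M) ` \<F>"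
  have \<C>_cone: "\<exists>x. balayage M x < top \<and> C = cone_at x \<inter> T \<inter> space M" if "C \<in> \<C>" for C
    using that \<F>(1) unfolding \<C>_def by blast
  have \<C>_sets: "\<C> \<subseteq> sets M"
  proof
    fix C
    assume "C \<in> \<C>"
    then obtain x where "C = (cone_at x \<inter> T) \<inter> space M"
      using \<C>_cone by blast
    moreover have "cone_at x \<inter> T \<in> sets borel"
      unfolding T_def closed_tent_def by (intro sets.Int borel_open borel_closed open_cone_at) simp
    ultimately show "C \<in> sets M"
      using measurable_sets[OF M_borel] by simp
  qed
  show ?thesis
  proof
    show "countable \<C>"
      unfolding \<C>_def using \<F>(2) by (rule countable_image)
    show "\<C> \<subseteq> sets M"
      by (fact \<C>_sets)
    show "emeasure M C < top" if C: "C \<in> \<C>" for C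
    proof -
      obtain x where "balayage M x < top" "C = cone_at x \<inter> T \<inter> space M"
        using \<C>_cone[OF C] by blast
      then show ?thesis
        using \<C>_sets C r by (intro emeasure_cone_at_closed_tent_less_top[of r M x C c]) (auto simp: T_def)
    qed
    fix z
    assume z: "z \<in> space M" and "indicator (closed_tent (ball c r)) z * ext_bal M z \<noteq> 0"
    then have "z \<in> T" and "ext_bal M z \<noteq> 0"
      by (auto simp: T_def indicator_def split: if_splits)
    moreover obtain x where "balayage M x < top" "z \<in> cone_at x"
      using ext_bal_nonzero_imp_cone_at[OF \<open>ext_bal M z \<noteq> 0\<close>] by blast
    then have "z \<in> \<Union>\<F>"
      unfolding \<F>(3) by blast
    with \<open>z \<in> T\<close> z show "z \<in> \<Union>\<C>"
      unfolding \<C>_def by blast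
  qed
qed

lemma closed_tent_ext_bal_integral_le:
  fixes M :: "('a::euclidean_space \<times> real) measure" and c :: 'a
  assumes M_borel: "(\<lambda>z. z) \<in> measurable M borel" and r: "0 < r"
  shows "(\<integral>\<^sup>+ z. indicator (closed_tent (ball c r)) z * ext_bal M z \<partial>M)
           \<le> ennreal (1 / unit_ball_vol DIM('a)) * emeasure lborel (ball c r)"
proof -
  define T where "T = closed_tent (ball c r)"
  obtain \<C> where \<C>: "countable \<C>" "\<C> \<subseteq> sets M" "\<And>C. C \<in> \<C> \<Longrightarrow> emeasure M C < top"
    and support: "\<And>z. z \<in> space M \<Longrightarrow> indicator T z * ext_bal M z \<noteq> 0 \<Longrightarrow> z \<in> \<Union>\<C>"
    using closed_tent_ext_bal_support_countable_cover[OF M_borel r] unfolding T_def by metis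
  define N where "N = restrict_space M (\<Union>\<C>)"
  have "\<Union>\<C> \<in> sets M"
    using \<C>(1,2) by (rule sets.countable_Union)
  then have Q: "\<Union>\<C> \<inter> space M \<in> sets M"
    by (simp add: sets.Int_space_eq2)
  have "(\<integral>\<^sup>+ z. indicator T z * ext_bal M z \<partial>M) = (\<integral>\<^sup>+ z. indicator T z * ext_bal M z \<partial>N)"
    unfolding N_def nn_integral_restrict_space[OF Q]
    by (intro nn_integral_cong) (metis indicator_simps(1) mult.comm_neutral mult_zero_left support)
  also have "\<dots> \<le> (\<integral>\<^sup>+ z. indicator T z * ext_bal N z \<partial>N)"
    unfolding N_def
    by (intro nn_integral_mono mult_left_mono ext_bal_antimono balayage_restrict_space_le Q) simp
  also have "\<dots> \<le> ennreal (1 / unit_ball_vol DIM('a)) * emeasure lborel (ball c r)"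
    unfolding T_def N_def
    by (intro closed_tent_ext_bal_integral_le_sigma_finite sigma_finite_measure_restrict_space_Union
        \<C> measurable_restrict_space1 M_borel)
  finally show ?thesis
    unfolding T_def .
qed

theorem lemma6p1:
  shows "\<exists>C::real. \<forall>M::('a::euclidean_space \<times> real) measure.
           sets M = sets (restrict_space borel upper_half_closed) \<longrightarrow>
           (\<forall>c r. 0 < r \<longrightarrow>
              (\<integral>\<^sup>+ z. indicator (closed_tent (ball c r)) z * ext_bal M z \<partial>M)
                / emeasure lborel (ball c r) \<le> ennreal C)"
proof (intro exI allI impI)
  fix M :: "('a \<times> real) measure" and c :: 'a and r :: real
  assume M: "sets M = sets (restrict_space borel upper_half_closed)" and r: "0 < r"
  have M_borel: "(\<lambda>z. z) \<in> measurable M borel"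
    using measurable_restrict_space1[OF measurable_ident_sets[OF refl]]
    by (simp add: measurable_cong_sets[OF M refl])
  have "0 < emeasure lborel (ball c r)"
    using r by (simp add: emeasure_ball)
  then show "(\<integral>\<^sup>+ z. indicator (closed_tent (ball c r)) z * ext_bal M z \<partial>M)
               / emeasure lborel (ball c r) \<le> ennreal (1 / unit_ball_vol DIM('a))"
    using closed_tent_ext_bal_integral_le[OF M_borel r, of c]
    by (intro divide_le_posI_ennreal) (simp_all add: mult.commute)
qed

end
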